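(* Let $f$ be a polynomial with integer coefficients of degree $r\ge3$ with positive leading coefficient, positive and strictly increasing on $[0,\infty)$. For each positive integer $N$ and real $x$ let \[ g_N(x)=\frac{f'(x)\left(1-\frac{f(x)}{f(N)}\right)}{\int_0^N f'(t)\left(1-\frac{f(t)}{f(N)}\right)dt}. \] Then for any fixed $\epsilon>0$, $\lim_{N\to\infty}N^{2-\epsilon}\sup_{x\in[0,N]}|g_N'(x)|=0$. *)

theory Defs
  imports "HOL-Analysis.Analysis" "HOL-Computational_Algebra.Polynomial"
begin

definition gN :: "real poly \<Rightarrow> nat \<Rightarrow> real \<Rightarrow> real" where
  "gN f N x =
     (poly (pderiv f) x * (1 - poly f x / poly f (real N))) /
     integral {0..real N} (\<lambda>t. poly (pderiv f) t * (1 - poly f t / poly f (real N)))"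

end

theory Submission
  imports Defs
begin

text \<open>The denominator of g_N has the closed form (f(N) - f(0))^2 / (2 f(N)), which is of
  order N^r. The numerator of g_N' is f''(x) (1 - f(x)/f(N)) - f'(x)^2 / f(N), and since
  0 <= 1 - f(x)/f(N) <= 1 on [0, N] it is O(N^(r-2)) uniformly there. Hence N^2 sup |g_N'| stays
  bounded, and the remaining factor N^(-\<epsilon>) sends the product to 0.\<close>

definition abs_coeff_sum :: "real poly \<Rightarrow> real" where
  "abs_coeff_sum p = (\<Sum>i\<le>degree p. \<bar>coeff p i\<bar>)"

lemma abs_poly_le_abs_coeff_sum:
  fixes p :: "real poly"
  assumes "\<bar>x\<bar> \<le> y" "1 \<le> y"
  shows "\<bar>poly p x\<bar> \<le> abs_coeff_sum p * y ^ degree p"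
proof -
  have "\<bar>poly p x\<bar> = \<bar>\<Sum>i\<le>degree p. coeff p i * x ^ i\<bar>" by (simp add: poly_altdef)
  also have "\<dots> \<le> (\<Sum>i\<le>degree p. \<bar>coeff p i * x ^ i\<bar>)" by (rule sum_abs)
  also have "\<dots> \<le> (\<Sum>i\<le>degree p. \<bar>coeff p i\<bar> * y ^ degree p)"
  proof (rule sum_mono)
    fix i assume i: "i \<in> {..degree p}"
    have "\<bar>x\<bar> ^ i \<le> y ^ i" by (rule power_mono) (use assms in auto)
    also have "\<dots> \<le> y ^ degree p" using i assms by (intro power_increasing) auto
    finally show "\<bar>coeff p i * x ^ i\<bar> \<le> \<bar>coeff p i\<bar> * y ^ degree p"
      by (simp add: abs_mult power_abs mult_left_mono)
  qed
  finally show ?thesis by (simp add: abs_coeff_sum_def sum_distrib_right)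
qed

lemma integral_gN_denominator:
  fixes F :: "real poly"
  assumes "0 \<le> b" "poly F b \<noteq> 0"
  shows "integral {0..b} (\<lambda>t. poly (pderiv F) t * (1 - poly F t / poly F b))
         = (poly F b - poly F 0)\<^sup>2 / (2 * poly F b)"
proof -
  define G where "G t = poly F t - (poly F t)\<^sup>2 / (2 * poly F b)" for t
  have "((\<lambda>t. poly (pderiv F) t * (1 - poly F t / poly F b)) has_integral G b - G 0) {0..b}"
  proof (rule fundamental_theorem_of_calculus)
    fix x assume "x \<in> {0..b}"
    have "(G has_real_derivative poly (pderiv F) x * (1 - poly F x / poly F b)) (at x)"
      unfolding G_def using assms(2)
      by (auto intro!: derivative_eq_intros simp: field_simps)
    then show "(G has_vector_derivative poly (pderiv F) x * (1 - poly F x / poly F b))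
        (at x within {0..b})"
      by (simp add: has_real_derivative_iff_has_vector_derivative[symmetric]
          has_field_derivative_at_within)
  qed (fact assms(1))
  then have "integral {0..b} (\<lambda>t. poly (pderiv F) t * (1 - poly F t / poly F b)) = G b - G 0"
    by (rule integral_unique)
  then show ?thesis
    using assms(2) by (simp add: G_def field_simps power2_eq_square)
qed

lemma deriv_gN:
  fixes F :: "real poly" and N :: nat
  defines "I \<equiv> integral {0..real N} (\<lambda>t. poly (pderiv F) t * (1 - poly F t / poly F (real N)))"
  assumes "poly F (real N) \<noteq> 0" "I \<noteq> 0"
  shows "deriv (gN F N) x = (poly (pderiv (pderiv F)) x * (1 - poly F x / poly F (real N))
           - (poly (pderiv F) x)\<^sup>2 / poly F (real N)) / I"
proof -
  have "gN F N = (\<lambda>x. poly (pderiv F) x * (1 - poly F x / poly F (real N)) / I)"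
    unfolding gN_def I_def by auto
  then have "(gN F N has_real_derivative (poly (pderiv (pderiv F)) x * (1 - poly F x / poly F (real N))
      + poly (pderiv F) x * (- (poly (pderiv F) x / poly F (real N)))) / I) (at x)"
    using assms by (auto intro!: derivative_eq_intros)
  from DERIV_imp_deriv[OF this] show ?thesis
    by (simp add: power2_eq_square)
qed

lemma abs_deriv_gN_le:
  fixes F :: "real poly"
  assumes "0 < poly F x" "poly F x \<le> poly F (real N)" "poly F 0 < poly F (real N)"
  shows "\<bar>deriv (gN F N) x\<bar> \<le> 2 * (poly F (real N) * \<bar>poly (pderiv (pderiv F)) x\<bar>
           + (poly (pderiv F) x)\<^sup>2) / (poly F (real N) - poly F 0)\<^sup>2"
proof -
  define P where "P = poly F (real N)"
  define t where "t = 1 - poly F x / P"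
  have P: "P > 0" and Q: "P - poly F 0 > 0" using assms by (auto simp: P_def)
  have t: "0 \<le> t" "t \<le> 1" using assms P by (auto simp: t_def P_def field_simps)
  have "deriv (gN F N) x = (poly (pderiv (pderiv F)) x * t - (poly (pderiv F) x)\<^sup>2 / P)
      * (2 * P / (P - poly F 0)\<^sup>2)"
    using deriv_gN[of F N x] integral_gN_denominator[of "real N" F] P Q
    by (simp add: P_def t_def)
  also have "\<bar>\<dots>\<bar> \<le> (\<bar>poly (pderiv (pderiv F)) x\<bar> + (poly (pderiv F) x)\<^sup>2 / P)
      * (2 * P / (P - poly F 0)\<^sup>2)"
  proof -
    have "\<bar>poly (pderiv (pderiv F)) x * t - (poly (pderiv F) x)\<^sup>2 / P\<bar>
        \<le> \<bar>poly (pderiv (pderiv F)) x\<bar> * t + (poly (pderiv F) x)\<^sup>2 / P"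
      using t P by (simp add: abs_mult abs_triangle_ineq4[THEN order_trans])
    also have "\<dots> \<le> \<bar>poly (pderiv (pderiv F)) x\<bar> + (poly (pderiv F) x)\<^sup>2 / P"
      using t by (simp add: mult_left_le)
    finally show ?thesis
      using P by (simp add: abs_mult) (intro divide_right_mono mult_right_mono; simp)
  qed
  also have "\<dots> = 2 * (P * \<bar>poly (pderiv (pderiv F)) x\<bar> + (poly (pderiv F) x)\<^sup>2) / (P - poly F 0)\<^sup>2"
    using P Q by (simp add: field_simps)
  finally show ?thesis by (simp add: P_def)
qed

text \<open>N^2 times the resulting bound on |g_N'|, with numerator and denominator divided by
  N^(2r) so that its limit can be read off.\<close>
definition deriv_gN_bound :: "real poly \<Rightarrow> real \<Rightarrow> real" where
  "deriv_gN_bound F n =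
     2 * (poly F n / n ^ degree F * abs_coeff_sum (pderiv (pderiv F)) + (abs_coeff_sum (pderiv F))\<^sup>2)
     / ((poly F n - poly F 0) / n ^ degree F)\<^sup>2"

lemma deriv_gN_bound_eq:
  fixes F :: "real poly"
  assumes "degree F = Suc (Suc k)" "n > 0" "poly F 0 \<noteq> poly F n"
  shows "deriv_gN_bound F n = n\<^sup>2 * (2 * (poly F n * (abs_coeff_sum (pderiv (pderiv F)) * n ^ k)
           + (abs_coeff_sum (pderiv F) * n ^ Suc k)\<^sup>2) / (poly F n - poly F 0)\<^sup>2)"
proof -
  define Q where "Q = poly F n - poly F 0"
  have "n ^ degree F = n ^ k * n\<^sup>2"
    using assms(1) by (simp add: power2_eq_square)
  moreover have "n ^ k > 0" "Q \<noteq> 0"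
    using assms(2,3) by (auto simp: Q_def)
  ultimately show ?thesis
    using assms(2) unfolding deriv_gN_bound_def Q_def [symmetric]
    by (simp add: field_simps power2_eq_square)
qed

lemma scaled_abs_deriv_gN_le_bound:
  fixes F :: "real poly" and N :: nat
  assumes "2 \<le> degree F" "1 \<le> N"
    and pos: "\<forall>x::real. x \<ge> 0 \<longrightarrow> poly F x > 0"
    and mono: "strict_mono_on {0::real..} (poly F)"
    and x: "x \<in> {0..real N}"
  shows "(real N)\<^sup>2 * \<bar>deriv (gN F N) x\<bar> \<le> deriv_gN_bound F (real N)"
proof -
  obtain k where r: "degree F = Suc (Suc k)"
    using assms(1) by (metis add_2_eq_Suc le_Suc_ex)
  define n where "n = real N"
  have n: "1 \<le> n" and x0: "0 \<le> x" and xn: "x \<le> n"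
    using assms(2) x by (auto simp: n_def)
  have F0: "poly F 0 < poly F n"
    using n by (auto intro!: strict_mono_onD[OF mono])
  have Fx: "poly F x \<le> poly F n"
    using x0 xn by (cases "x = n") (auto intro!: less_imp_le strict_mono_onD[OF mono])
  have F'': "\<bar>poly (pderiv (pderiv F)) x\<bar> \<le> abs_coeff_sum (pderiv (pderiv F)) * n ^ k"
    using abs_poly_le_abs_coeff_sum[of x n "pderiv (pderiv F)"] x0 xn n
    by (simp add: degree_pderiv r)
  have "\<bar>poly (pderiv F) x\<bar> \<le> abs_coeff_sum (pderiv F) * n ^ Suc k"
    using abs_poly_le_abs_coeff_sum[of x n "pderiv F"] x0 xn n
    by (simp add: degree_pderiv r)
  then have F': "(poly (pderiv F) x)\<^sup>2 \<le> (abs_coeff_sum (pderiv F) * n ^ Suc k)\<^sup>2"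
    by (metis abs_ge_zero power2_abs power_mono)
  have "n\<^sup>2 * \<bar>deriv (gN F N) x\<bar> \<le> n\<^sup>2 * (2 * (poly F n * \<bar>poly (pderiv (pderiv F)) x\<bar>
      + (poly (pderiv F) x)\<^sup>2) / (poly F n - poly F 0)\<^sup>2)"
    using abs_deriv_gN_le[of F x N] pos x0 Fx F0 by (intro mult_left_mono) (auto simp: n_def)
  also have "\<dots> \<le> n\<^sup>2 * (2 * (poly F n * (abs_coeff_sum (pderiv (pderiv F)) * n ^ k)
      + (abs_coeff_sum (pderiv F) * n ^ Suc k)\<^sup>2) / (poly F n - poly F 0)\<^sup>2)"
    using F'' F' pos[rule_format, of n] n
    by (intro mult_left_mono divide_right_mono mult_left_mono add_mono) auto
  also have "\<dots> = deriv_gN_bound F n"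
    using deriv_gN_bound_eq[OF r _ less_imp_neq[OF F0]] n by simp
  finally show ?thesis by (simp add: n_def)
qed

lemma deriv_gN_bound_tendsto:
  fixes F :: "real poly"
  assumes "degree F > 0"
  shows "(deriv_gN_bound F \<longlongrightarrow>
      2 * (lead_coeff F * abs_coeff_sum (pderiv (pderiv F)) + (abs_coeff_sum (pderiv F))\<^sup>2)
      / (lead_coeff F)\<^sup>2) at_top"
proof -
  have lead: "((\<lambda>n. poly F n / n ^ degree F) \<longlongrightarrow> lead_coeff F) at_top"
    by (rule tendsto_mono[OF at_top_le_at_infinity poly_divide_tendsto_aux])
  have "((\<lambda>n. poly F 0 / n ^ degree F) \<longlongrightarrow> 0) at_top"
    using assms by (intro tendsto_divide_0[OF tendsto_const] filterlim_at_top_imp_at_infinity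
        filterlim_pow_at_top filterlim_ident)
  from tendsto_diff[OF lead this]
  have diff: "((\<lambda>n. (poly F n - poly F 0) / n ^ degree F) \<longlongrightarrow> lead_coeff F) at_top"
    by (simp add: diff_divide_distrib)
  have "lead_coeff F \<noteq> 0"
    using assms by auto
  then show ?thesis
    unfolding deriv_gN_bound_def
    by (intro tendsto_divide tendsto_mult tendsto_add tendsto_power tendsto_const lead diff) simp
qed

lemma SUP_abs_deriv_gN_le_bound:
  fixes F :: "real poly" and N :: nat
  assumes "2 \<le> degree F" "1 \<le> N"
    and "\<forall>x::real. x \<ge> 0 \<longrightarrow> poly F x > 0"
    and "strict_mono_on {0::real..} (poly F)"
  shows "0 \<le> (SUP x\<in>{0..real N}. \<bar>deriv (gN F N) x\<bar>)"
    and "(SUP x\<in>{0..real N}. \<bar>deriv (gN F N) x\<bar>) \<le> deriv_gN_bound F (real N) / (real N)\<^sup>2"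
proof -
  have le: "\<bar>deriv (gN F N) x\<bar> \<le> deriv_gN_bound F (real N) / (real N)\<^sup>2"
    if "x \<in> {0..real N}" for x
    using scaled_abs_deriv_gN_le_bound[OF assms that] assms(2)
    by (simp add: pos_le_divide_eq mult.commute)
  have "\<bar>deriv (gN F N) 0\<bar> \<le> (SUP x\<in>{0..real N}. \<bar>deriv (gN F N) x\<bar>)"
    using le by (intro cSUP_upper bdd_aboveI2) auto
  then show "0 \<le> (SUP x\<in>{0..real N}. \<bar>deriv (gN F N) x\<bar>)"
    by linarith
  show "(SUP x\<in>{0..real N}. \<bar>deriv (gN F N) x\<bar>) \<le> deriv_gN_bound F (real N) / (real N)\<^sup>2"
    using le by (intro cSUP_least) auto
qed

theorem lemma8:
  fixes f :: "int poly" and \<epsilon> :: real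
  defines "F \<equiv> map_poly real_of_int f"
  assumes "degree f \<ge> 3"
    and "lead_coeff f > 0"
    and "\<forall>x::real. x \<ge> 0 \<longrightarrow> poly F x > 0"
    and "strict_mono_on {0::real..} (poly F)"
    and "\<epsilon> > 0"
  shows "(\<lambda>N::nat. real N powr (2 - \<epsilon>) *
            (SUP x\<in>{0..real N}. \<bar>deriv (gN F N) x\<bar>)) \<longlonglongrightarrow> 0"
proof -
  define S where "S N = (SUP x\<in>{0..real N}. \<bar>deriv (gN F N) x\<bar>)" for N
  have "degree F = degree f"
    unfolding F_def by (rule degree_map_poly) simp
  then have deg: "2 \<le> degree F"
    using assms(2) by simp
  obtain L where "(deriv_gN_bound F \<longlongrightarrow> L) at_top"
    using deriv_gN_bound_tendsto[of F] deg by simp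
  then have "(\<lambda>N. deriv_gN_bound F (real N)) \<longlonglongrightarrow> L"
    using filterlim_real_sequentially by (rule filterlim_compose)
  moreover have "(\<lambda>N. real N powr (- \<epsilon>)) \<longlonglongrightarrow> 0"
    using assms(6) by (intro tendsto_neg_powr filterlim_real_sequentially) simp
  ultimately have majorant: "(\<lambda>N. real N powr (- \<epsilon>) * deriv_gN_bound F (real N)) \<longlonglongrightarrow> 0"
    using tendsto_mult by fastforce
  have "\<forall>\<^sub>F N in sequentially. 0 \<le> real N powr (2 - \<epsilon>) * S N \<and>
      real N powr (2 - \<epsilon>) * S N \<le> real N powr (- \<epsilon>) * deriv_gN_bound F (real N)"
    using eventually_ge_at_top[of 1]
  proof eventually_elim
    case (elim N)
    have "real N powr (2 - \<epsilon>) * (deriv_gN_bound F (real N) / (real N)\<^sup>2)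
        = real N powr (- \<epsilon>) * deriv_gN_bound F (real N)"
      using elim by (simp add: powr_diff powr_minus_divide field_simps)
    with SUP_abs_deriv_gN_le_bound[OF deg elim assms(4,5)] show ?case
      unfolding S_def by (metis mult_left_mono mult_nonneg_nonneg powr_ge_zero)
  qed
  then show ?thesis
    unfolding S_def by (intro tendsto_sandwich[OF _ _ tendsto_const majorant]) (auto elim: eventually_mono)
qed

end
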